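(* Let $A\in B(\mathbb{H})$ with $A\ge0$ and let $X,Y\in B_A(\mathbb{H})$. Then \[ w_A(Y^{\sharp_A}X)\le\frac14\big\|XX^{\sharp_A}+YY^{\sharp_A}\big\|_A+\frac12 w_A(XY^{\sharp_A}). \]
   Context: $\mathbb{H}$ is a complex Hilbert space, $B(\mathbb{H})$ the bounded linear operators on it, $O$ the zero operator. For a positive operator $A\in B(\mathbb{H})$ ($A\ge0$) set $\langle x,y\rangle_A=\langle Ax,y\rangle$ and $\|x\|_A=\sqrt{\langle x,x\rangle_A}$; $A>0$ means $\langle Ax,x\rangle>0$ for all $x\ne0$. For $T\in B(\mathbb{H})$: $\|T\|_A=\sup\{\|Tx\|_A/\|x\|_A: x\in\overline{R(A)},x\ne0\}$, where $R(A)$ is the range of $A$; $W_A(T)=\{\langle Tx,x\rangle_A:x\in\mathbb{H},\|x\|_A=1\}$, $w_A(T)=\sup\{|\lambda|:\lambda\in W_A(T)\}$ and $m_A(T)=\inf\{|\lambda|:\lambda\in W_A(T)\}$. $B_A(\mathbb{H})$ is the set of $T\in B(\mathbb{H})$ for which some $R\in B(\mathbb{H})$ satisfies $AR=T^*A$; for such $T$, $T^{\sharp_A}$ denotes the distinguished such $R$, namely the unique solution of $AR=T^*A$ with range contained in $\overline{R(A)}$ (when $A>0$ it is the unique solution). $\mathrm{Re}_A(T)=\frac12(T+T^{\sharp_A})$. *)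

theory Defs
  imports "HOL-Analysis.Analysis"
begin

text \<open>The distribution has no complex vector spaces, so we introduce the class of complex
  Hilbert spaces: a real Banach space with a compatible complex scalar multiplication and a
  complex inner product (linear in the first argument) inducing the norm.\<close>

class complex_hilbert = banach +
  fixes scaleC :: "complex \<Rightarrow> 'a \<Rightarrow> 'a" (infixr "*\<^sub>C" 75)
    and cinner :: "'a \<Rightarrow> 'a \<Rightarrow> complex"
  assumes scaleC_add_right: "a *\<^sub>C (x + y) = a *\<^sub>C x + a *\<^sub>C y"
    and scaleC_add_left: "(a + b) *\<^sub>C x = a *\<^sub>C x + b *\<^sub>C x"
    and scaleC_scaleC: "a *\<^sub>C (b *\<^sub>C x) = (a * b) *\<^sub>C x"
    and scaleC_one: "1 *\<^sub>C x = x"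
    and scaleR_scaleC: "scaleR r x = complex_of_real r *\<^sub>C x"
    and cinner_add_left: "cinner (x + y) z = cinner x z + cinner y z"
    and cinner_scaleC_left: "cinner (a *\<^sub>C x) y = a * cinner x y"
    and cinner_commute: "cinner y x = cnj (cinner x y)"
    and cinner_ge_zero: "0 \<le> Re (cinner x x)"
    and cinner_eq_zero_iff: "cinner x x = 0 \<longleftrightarrow> x = 0"
    and norm_eq_sqrt_cinner: "norm x = sqrt (Re (cinner x x))"

instantiation complex :: complex_hilbert
begin
definition scaleC_complex :: "complex \<Rightarrow> complex \<Rightarrow> complex" where
  "scaleC_complex a x = a * x"
definition cinner_complex :: "complex \<Rightarrow> complex \<Rightarrow> complex" where
  "cinner_complex x y = x * cnj y"
instance
proof
  fix a b x y z :: complex and r :: real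
  show "a *\<^sub>C (x + y) = a *\<^sub>C x + a *\<^sub>C y" by (simp add: scaleC_complex_def algebra_simps)
  show "(a + b) *\<^sub>C x = a *\<^sub>C x + b *\<^sub>C x" by (simp add: scaleC_complex_def algebra_simps)
  show "a *\<^sub>C (b *\<^sub>C x) = (a * b) *\<^sub>C x" by (simp add: scaleC_complex_def)
  show "1 *\<^sub>C x = x" by (simp add: scaleC_complex_def)
  show "scaleR r x = complex_of_real r *\<^sub>C x" by (simp add: scaleC_complex_def scaleR_conv_of_real)
  show "cinner (x + y) z = cinner x z + cinner y z" by (simp add: cinner_complex_def algebra_simps)
  show "cinner (a *\<^sub>C x) y = a * cinner x y" by (simp add: cinner_complex_def scaleC_complex_def)
  show "cinner y x = cnj (cinner x y)" by (simp add: cinner_complex_def)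
  show "0 \<le> Re (cinner x x)" by (simp add: cinner_complex_def)
  show "cinner x x = 0 \<longleftrightarrow> x = 0" by (simp add: cinner_complex_def)
  show "norm x = sqrt (Re (cinner x x))" by (simp add: cinner_complex_def cmod_def power2_eq_square)
qed
end

definition bop :: "('a::complex_hilbert \<Rightarrow> 'a) \<Rightarrow> bool" where
  "bop T \<longleftrightarrow> bounded_linear T \<and> (\<forall>c x. T (c *\<^sub>C x) = c *\<^sub>C T x)"

definition adj :: "('a::complex_hilbert \<Rightarrow> 'a) \<Rightarrow> ('a \<Rightarrow> 'a)" where
  "adj T = (THE S. bop S \<and> (\<forall>x y. cinner (S x) y = cinner x (T y)))"

definition positive_op :: "('a::complex_hilbert \<Rightarrow> 'a) \<Rightarrow> bool" where
  "positive_op A \<longleftrightarrow> bop A \<and> (\<forall>x. Im (cinner (A x) x) = 0 \<and> 0 \<le> Re (cinner (A x) x))"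

definition BA :: "('a::complex_hilbert \<Rightarrow> 'a) \<Rightarrow> ('a \<Rightarrow> 'a) set" where
  "BA A = {T. bop T \<and> (\<exists>R. bop R \<and> A \<circ> R = adj T \<circ> A)}"

definition sharpA :: "('a::complex_hilbert \<Rightarrow> 'a) \<Rightarrow> ('a \<Rightarrow> 'a) \<Rightarrow> ('a \<Rightarrow> 'a)" where
  "sharpA A T = (THE R. bop R \<and> A \<circ> R = adj T \<circ> A \<and> range R \<subseteq> closure (range A))"

definition normA :: "('a::complex_hilbert \<Rightarrow> 'a) \<Rightarrow> 'a \<Rightarrow> real" where
  "normA A x = sqrt (Re (cinner (A x) x))"

text \<open>Suprema of sets of nonnegative reals; the empty supremum is taken to be 0.\<close>
definition opnormA :: "('a::complex_hilbert \<Rightarrow> 'a) \<Rightarrow> ('a \<Rightarrow> 'a) \<Rightarrow> real" where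
  "opnormA A T = Sup (insert 0 {normA A (T x) / normA A x | x. x \<in> closure (range A) \<and> x \<noteq> 0})"

definition numrangeA :: "('a::complex_hilbert \<Rightarrow> 'a) \<Rightarrow> ('a \<Rightarrow> 'a) \<Rightarrow> complex set" where
  "numrangeA A T = {cinner (A (T x)) x | x. normA A x = 1}"

definition numradA :: "('a::complex_hilbert \<Rightarrow> 'a) \<Rightarrow> ('a \<Rightarrow> 'a) \<Rightarrow> real" where
  "numradA A T = Sup (insert 0 (cmod ` numrangeA A T))"

end

theory Submission
  imports Defs
begin

text \<open>Fix an \<open>A\<close>-unit vector \<open>x\<close>, let \<open>c = \<langle>Y\<^sup>\<sharp>X x, x\<rangle>\<^sub>A = \<langle>X x, Y x\<rangle>\<^sub>A\<close> and choose a unimodular \<open>\<omega>\<close>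
  with \<open>\<omega> c = |c|\<close>. For \<open>W = \<omega> X + Y\<close> polarization gives \<open>4|c| \<le> \<parallel>W x\<parallel>\<^sub>A\<^sup>2 =: s\<close>, and
  \<open>s = \<langle>x, W\<^sup>\<sharp>W x\<rangle>\<^sub>A\<close> gives \<open>s\<^sup>2 \<le> \<parallel>W\<^sup>\<sharp>W x\<parallel>\<^sub>A\<^sup>2 = \<langle>W x, W W\<^sup>\<sharp>W x\<rangle>\<^sub>A\<close>. Expanding
  \<open>W W\<^sup>\<sharp> = (XX\<^sup>\<sharp> + YY\<^sup>\<sharp>) + \<omega> XY\<^sup>\<sharp> + \<omega>\<^sup>* YX\<^sup>\<sharp>\<close>, where the quadratic forms of the two cross
  terms are conjugate, bounds this by \<open>(\<parallel>XX\<^sup>\<sharp> + YY\<^sup>\<sharp>\<parallel>\<^sub>A + 2 w\<^sub>A(XY\<^sup>\<sharp>)) s\<close>; hence \<open>s\<close> is at most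
  the bracket and \<open>|c| \<le> s/4\<close> is the claimed bound.

  The suprema defining \<open>\<parallel>\<cdot>\<parallel>\<^sub>A\<close> and \<open>w\<^sub>A\<close> are unspecified for unbounded sets, so the right-hand side
  only has its intended meaning once \<open>XX\<^sup>\<sharp> + YY\<^sup>\<sharp>\<close> and \<open>XY\<^sup>\<sharp>\<close> are known to be \<open>A\<close>-bounded. Every
  operator with an \<open>A\<close>-adjoint is: for \<open>A\<close>-selfadjoint \<open>S\<close>, iterating
  \<open>\<parallel>S u\<parallel>\<^sub>A\<^sup>2 \<le> \<parallel>u\<parallel>\<^sub>A \<parallel>S\<^sup>2 u\<parallel>\<^sub>A\<close> along the powers \<open>S\<^bsup>2^k\<^esup>\<close> and comparing with the growth
  \<open>\<parallel>S\<^sup>n\<parallel> \<le> L\<^sup>n\<close> of the ordinary norm yields \<open>\<parallel>S u\<parallel>\<^sub>A \<le> L \<parallel>u\<parallel>\<^sub>A\<close>.\<close>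


section \<open>Complex inner products and Hermitian forms\<close>

lemma scaleC_zero_right [simp]: "a *\<^sub>C (0::'a::complex_hilbert) = 0"
  using scaleC_add_right[of a "0::'a" 0] by simp

lemma scaleC_minus_right: "a *\<^sub>C (- x::'a::complex_hilbert) = - (a *\<^sub>C x)"
  using scaleC_add_right[of a "-x" x] by (simp add: eq_neg_iff_add_eq_0)

lemma scaleC_diff_right: "a *\<^sub>C (x - y::'a::complex_hilbert) = a *\<^sub>C x - a *\<^sub>C y"
  using scaleC_add_right[of a x "-y"] by (simp add: scaleC_minus_right)

lemma cinner_zero_left [simp]: "cinner (0::'a::complex_hilbert) y = 0"
  using cinner_add_left[of "0::'a" 0 y] by simp

lemma cinner_minus_left: "cinner (- x::'a::complex_hilbert) y = - cinner x y"
  using cinner_add_left[of "-x" x y] by (simp add: eq_neg_iff_add_eq_0)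

lemma cinner_diff_left: "cinner (x - z::'a::complex_hilbert) y = cinner x y - cinner z y"
  using cinner_add_left[of x "-z" y] by (simp add: cinner_minus_left)

lemma cinner_add_right: "cinner (x::'a::complex_hilbert) (y + z) = cinner x y + cinner x z"
  by (metis cinner_add_left cinner_commute complex_cnj_add)

lemma cinner_scaleC_right: "cinner (x::'a::complex_hilbert) (a *\<^sub>C y) = cnj a * cinner x y"
  by (metis cinner_scaleC_left cinner_commute complex_cnj_mult)

lemma cinner_zero_right [simp]: "cinner (x::'a::complex_hilbert) 0 = 0"
  by (metis cinner_zero_left cinner_commute complex_cnj_zero)

lemma cinner_diff_right: "cinner (x::'a::complex_hilbert) (y - z) = cinner x y - cinner x z"
  by (metis cinner_diff_left cinner_commute complex_cnj_diff)

lemma cinner_scaleR_left: "cinner (r *\<^sub>R x::'a::complex_hilbert) y = complex_of_real r * cinner x y"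
  by (simp add: scaleR_scaleC cinner_scaleC_left)

lemma cinner_scaleR_right: "cinner (x::'a::complex_hilbert) (r *\<^sub>R y) = complex_of_real r * cinner x y"
  by (simp add: scaleR_scaleC cinner_scaleC_right)

lemma cinner_self_real: "cinner (x::'a::complex_hilbert) x = complex_of_real (Re (cinner x x))"
  using cinner_commute[of x x] by (simp add: complex_eq_iff)

lemma power2_norm_eq_cinner: "(norm (x::'a::complex_hilbert))\<^sup>2 = Re (cinner x x)"
  by (simp add: norm_eq_sqrt_cinner cinner_ge_zero)

lemma cinner_ext_right: "(\<And>y. cinner y (s::'a::complex_hilbert) = cinner y s') \<Longrightarrow> s = s'"
  by (metis cinner_diff_right cinner_eq_zero_iff right_minus_eq)

lemma cinner_ext_left: "(\<And>y. cinner (s::'a::complex_hilbert) y = cinner s' y) \<Longrightarrow> s = s'"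
  by (metis cinner_diff_left cinner_eq_zero_iff right_minus_eq)

locale hermitian_form =
  fixes B :: "'a::complex_hilbert \<Rightarrow> 'a \<Rightarrow> complex"
  assumes add_left: "B (x + y) z = B x z + B y z"
    and scaleC_left: "B (a *\<^sub>C x) y = a * B x y"
    and commute: "B y x = cnj (B x y)"
    and self_nonneg: "0 \<le> Re (B x x)"
begin

lemma scaleC_right: "B x (a *\<^sub>C y) = cnj a * B x y"
  by (metis scaleC_left commute complex_cnj_mult)

lemma diff_left: "B (x - z) y = B x y - B z y"
  by (metis add_left add_diff_cancel eq_diff_eq)

lemma diff_right: "B x (y - z) = B x y - B x z"
  by (metis diff_left commute complex_cnj_diff)

lemma self_real: "B x x = complex_of_real (Re (B x x))"
  using commute[of x x] by (simp add: complex_eq_iff)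

lemma Cauchy_Schwarz: "(cmod (B x y))\<^sup>2 \<le> Re (B x x) * Re (B y y)"
proof -
  let ?b = "B x y"
  have quadratic: "0 \<le> Re (B x x) - 2 * t * (cmod ?b)\<^sup>2 + t\<^sup>2 * (cmod ?b)\<^sup>2 * Re (B y y)" for t :: real
  proof -
    define c where "c = complex_of_real t * ?b"
    have "B (x - c *\<^sub>C y) (x - c *\<^sub>C y) = B x x - cnj c * ?b - c * B y x + c * cnj c * B y y"
      by (simp add: diff_left diff_right scaleC_left scaleC_right right_diff_distrib mult.assoc)
    also have "\<dots> = B x x - 2 * complex_of_real t * (?b * cnj ?b) + (complex_of_real t)\<^sup>2 * (?b * cnj ?b) * B y y"
      unfolding c_def commute[of x y] by (simp add: power2_eq_square mult_ac)
    also have "\<dots> = complex_of_real (Re (B x x) - 2 * t * (cmod ?b)\<^sup>2 + t\<^sup>2 * (cmod ?b)\<^sup>2 * Re (B y y))"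
      by (subst self_real[of x], subst self_real[of y], simp only: complex_norm_square[symmetric]) simp
    finally show ?thesis using self_nonneg[of "x - c *\<^sub>C y"] by simp
  qed
  show ?thesis
  proof (cases "Re (B y y) = 0")
    case True
    show ?thesis
    proof (rule ccontr)
      assume "\<not> ?thesis"
      then have "(cmod ?b)\<^sup>2 > 0" using True by simp
      moreover have "0 \<le> Re (B x x) - 2 * ((Re (B x x) + 1) / (2 * (cmod ?b)\<^sup>2)) * (cmod ?b)\<^sup>2"
        using quadratic[of "(Re (B x x) + 1) / (2 * (cmod ?b)\<^sup>2)"] True by simp
      ultimately show False by (simp add: field_simps)
    qed
  next
    case False
    then have pos: "Re (B y y) > 0" using self_nonneg[of y] by simp
    have "0 \<le> Re (B x x) - 2 * (1 / Re (B y y)) * (cmod ?b)\<^sup>2 + (1 / Re (B y y))\<^sup>2 * (cmod ?b)\<^sup>2 * Re (B y y)"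
      by (rule quadratic)
    then show ?thesis using pos by (simp add: field_simps power2_eq_square)
  qed
qed

end

lemma hermitian_form_cinner: "hermitian_form (cinner :: 'a::complex_hilbert \<Rightarrow> _)"
  by unfold_locales (simp_all add: cinner_add_left cinner_scaleC_left cinner_commute[symmetric] cinner_ge_zero)

lemma cinner_Cauchy_Schwarz: "cmod (cinner x y) \<le> norm x * norm (y::'a::complex_hilbert)"
proof -
  have "(cmod (cinner x y))\<^sup>2 \<le> (norm x * norm y)\<^sup>2"
    using hermitian_form.Cauchy_Schwarz[OF hermitian_form_cinner, of x y]
    by (simp add: power2_norm_eq_cinner power_mult_distrib)
  then show ?thesis by (rule power2_le_imp_le) simp
qed

lemma bounded_linear_cinner_right: "bounded_linear (\<lambda>y. cinner (x::'a::complex_hilbert) y)"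
  by (rule bounded_linear_intro[where K="norm x"])
    (simp_all add: cinner_add_right cinner_scaleR_right scaleR_conv_of_real,
     metis cinner_Cauchy_Schwarz mult.commute)

lemma bounded_linear_cinner_left: "bounded_linear (\<lambda>x. cinner (x::'a::complex_hilbert) y)"
  by (rule bounded_linear_intro[where K="norm y"])
    (simp_all add: cinner_add_left cinner_scaleR_left scaleR_conv_of_real cinner_Cauchy_Schwarz)

lemma norm_scaleC: "norm (c *\<^sub>C (x::'a::complex_hilbert)) = cmod c * norm x"
proof -
  have "cinner (c *\<^sub>C x) (c *\<^sub>C x) = (c * cnj c) * cinner x x"
    by (simp add: cinner_scaleC_left cinner_scaleC_right)
  also have "\<dots> = complex_of_real ((cmod c)\<^sup>2 * Re (cinner x x))"
    by (subst cinner_self_real, simp only: complex_norm_square[symmetric] of_real_mult)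
  finally have "cinner (c *\<^sub>C x) (c *\<^sub>C x) = complex_of_real ((cmod c)\<^sup>2 * Re (cinner x x))" .
  then have "(norm (c *\<^sub>C x))\<^sup>2 = (cmod c * norm x)\<^sup>2"
    by (simp add: power2_norm_eq_cinner power_mult_distrib)
  then show ?thesis by (simp add: power2_eq_iff_nonneg)
qed

lemma bounded_linear_scaleC: "bounded_linear (\<lambda>x::'a::complex_hilbert. c *\<^sub>C x)"
  by (rule bounded_linear_intro[where K="cmod c"])
    (simp_all add: scaleC_add_right scaleR_scaleC scaleC_scaleC mult.commute norm_scaleC)

lemma parallelogram_law:
  "(norm (u + v::'a::complex_hilbert))\<^sup>2 + (norm (u - v))\<^sup>2 = 2 * (norm u)\<^sup>2 + 2 * (norm v)\<^sup>2"
  unfolding power2_norm_eq_cinner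
  by (simp add: cinner_add_left cinner_add_right cinner_diff_left cinner_diff_right)


section \<open>Bounded operators, orthogonal projection and adjoints\<close>

lemma bop_bounded_linear: "bop T \<Longrightarrow> bounded_linear T" by (simp add: bop_def)
lemma bop_scaleC: "bop T \<Longrightarrow> T (c *\<^sub>C x) = c *\<^sub>C T x" by (simp add: bop_def)
lemma bop_scaleR: "bop T \<Longrightarrow> T (r *\<^sub>R x) = r *\<^sub>R T x" by (simp add: scaleR_scaleC bop_scaleC)
lemma bop_add: "bop T \<Longrightarrow> T (x + y) = T x + T y" by (simp add: bop_def linear_add bounded_linear.linear)
lemma bop_diff: "bop T \<Longrightarrow> T (x - y) = T x - T y" by (simp add: bop_def linear_diff bounded_linear.linear)
lemma bop_zero: "bop T \<Longrightarrow> T 0 = 0" by (simp add: bop_def linear_0 bounded_linear.linear)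

lemma bop_comp: "bop f \<Longrightarrow> bop g \<Longrightarrow> bop (\<lambda>x. f (g x))"
  unfolding bop_def using bounded_linear_compose by auto

lemma bop_add_fun: "bop f \<Longrightarrow> bop g \<Longrightarrow> bop (\<lambda>x. f x + g x)"
  unfolding bop_def using bounded_linear_add by (auto simp: scaleC_add_right)

definition csubspace :: "'a::complex_hilbert set \<Rightarrow> bool" where
  "csubspace M \<longleftrightarrow> 0 \<in> M \<and> (\<forall>x\<in>M. \<forall>y\<in>M. x + y \<in> M) \<and> (\<forall>c. \<forall>x\<in>M. c *\<^sub>C x \<in> M)"

lemma csubspace_0: "csubspace M \<Longrightarrow> 0 \<in> M" by (simp add: csubspace_def)
lemma csubspace_add: "csubspace M \<Longrightarrow> x \<in> M \<Longrightarrow> y \<in> M \<Longrightarrow> x + y \<in> M" by (simp add: csubspace_def)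
lemma csubspace_scaleC: "csubspace M \<Longrightarrow> x \<in> M \<Longrightarrow> c *\<^sub>C x \<in> M" by (simp add: csubspace_def)
lemma csubspace_scaleR: "csubspace M \<Longrightarrow> x \<in> M \<Longrightarrow> r *\<^sub>R x \<in> M" by (simp add: csubspace_def scaleR_scaleC)
lemma csubspace_diff: "csubspace M \<Longrightarrow> x \<in> M \<Longrightarrow> y \<in> M \<Longrightarrow> x - y \<in> M"
  using csubspace_add[of M x "(-1) *\<^sub>R y"] csubspace_scaleR[of M y "-1"] by simp

lemma csubspace_closure:
  assumes "csubspace M"
  shows "csubspace (closure M)"
  unfolding csubspace_def
proof (intro conjI ballI allI)
  show "0 \<in> closure M" using assms csubspace_0 closure_subset by blast
next
  fix x y assume "x \<in> closure M" "y \<in> closure M"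
  then obtain f g where f: "\<forall>n. f n \<in> M" "f \<longlonglongrightarrow> x" and g: "\<forall>n. g n \<in> M" "g \<longlonglongrightarrow> y"
    unfolding closure_sequential by blast
  have "\<forall>n. f n + g n \<in> M" using f g assms csubspace_add by blast
  moreover have "(\<lambda>n. f n + g n) \<longlonglongrightarrow> x + y" using f g by (intro tendsto_add)
  ultimately show "x + y \<in> closure M"
    unfolding closure_sequential by (intro exI[of _ "\<lambda>n. f n + g n"]) simp
next
  fix c x assume "x \<in> closure M"
  then have "c *\<^sub>C x \<in> (\<lambda>x. c *\<^sub>C x) ` closure M" by blast
  also have "\<dots> \<subseteq> closure ((\<lambda>x. c *\<^sub>C x) ` M)"
    by (rule closure_bounded_linear_image_subset[OF bounded_linear_scaleC])
  also have "\<dots> \<subseteq> closure M" using assms csubspace_scaleC by (intro closure_mono) blast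
  finally show "c *\<^sub>C x \<in> closure M" .
qed

lemma csubspace_range: "bop A \<Longrightarrow> csubspace (range A)"
  unfolding csubspace_def
  by (metis (no_types, lifting) bop_add bop_scaleC bop_zero rangeE rangeI)

lemma power2_norm_remove_component:
  fixes u m :: "'a::complex_hilbert"
  assumes "m \<noteq> 0"
  shows "(norm (u - (cinner u m / complex_of_real ((norm m)\<^sup>2)) *\<^sub>C m))\<^sup>2
         = (norm u)\<^sup>2 - (cmod (cinner u m))\<^sup>2 / (norm m)\<^sup>2"
proof -
  let ?a = "cinner u m"
  let ?s = "(norm m)\<^sup>2"
  define t where "t = ?a / complex_of_real ?s"
  have s0: "?s \<noteq> 0" using assms by simp
  have mm: "cinner m m = complex_of_real ?s" by (simp add: power2_norm_eq_cinner cinner_self_real[symmetric])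
  have "cinner (u - t *\<^sub>C m) (u - t *\<^sub>C m) = cinner u u - cnj t * ?a - t * cinner m u + t * cnj t * cinner m m"
    by (simp add: cinner_diff_left cinner_diff_right cinner_scaleC_left cinner_scaleC_right
        right_diff_distrib mult.assoc)
  also have "\<dots> = cinner u u - ?a * cnj ?a / complex_of_real ?s"
    unfolding t_def mm cinner_commute[of m u] using s0
    by (simp add: field_simps power2_eq_square del: of_real_power)
  also have "\<dots> = complex_of_real ((norm u)\<^sup>2 - (cmod ?a)\<^sup>2 / ?s)"
    by (simp add: complex_norm_square[symmetric] power2_norm_eq_cinner cinner_self_real[symmetric]
        del: of_real_power)
  finally show ?thesis unfolding t_def power2_norm_eq_cinner[of "u - _"] by simp
qed

lemma power2_norm_diff_midpoint:
  fixes x y z :: "'a::complex_hilbert"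
  shows "(norm (y - z))\<^sup>2 = 2 * (norm (x - y))\<^sup>2 + 2 * (norm (x - z))\<^sup>2
    - 4 * (norm (x - (1/2) *\<^sub>R (y + z)))\<^sup>2"
proof -
  have "(x - y) + (x - z) = 2 *\<^sub>R (x - (1/2) *\<^sub>R (y + z))" by (simp add: algebra_simps scaleR_2)
  then have "(norm ((x - y) + (x - z)))\<^sup>2 = 4 * (norm (x - (1/2) *\<^sub>R (y + z)))\<^sup>2"
    by (simp add: power2_eq_square)
  then show ?thesis using parallelogram_law[of "x - y" "x - z"] by (simp add: norm_minus_commute)
qed

lemma closed_csubspace_nearest_point:
  fixes M :: "'a::complex_hilbert set"
  assumes M: "csubspace M" "closed M"
  shows "\<exists>p\<in>M. \<forall>m\<in>M. norm (x - p) \<le> norm (x - m)"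
proof -
  define D where "D m = (norm (x - m))\<^sup>2" for m
  define d where "d = Inf (D ` M)"
  have bdd: "bdd_below (D ` M)" unfolding D_def by (intro bdd_belowI[where m=0]) auto
  have d_le: "d \<le> D m" if "m \<in> M" for m unfolding d_def using bdd that by (intro cInf_lower) auto
  have "\<exists>m\<in>M. D m < d + inverse (real (Suc n))" for n
    using cInf_less_iff[OF _ bdd, of "d + inverse (real (Suc n))"] csubspace_0[OF M(1)]
    unfolding d_def by auto
  then obtain f where f: "\<And>n. f n \<in> M" "\<And>n. D (f n) < d + inverse (real (Suc n))" by metis
  have parallelogram: "(norm (f n - f k))\<^sup>2 \<le> 2 * D (f n) + 2 * D (f k) - 4 * d" for n k
  proof -
    have "(1/2) *\<^sub>R (f n + f k) \<in> M" using f(1) M(1) csubspace_add csubspace_scaleR by blast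
    then show ?thesis using power2_norm_diff_midpoint[of "f n" "f k" x] d_le unfolding D_def by force
  qed
  have "Cauchy f"
  proof (rule CauchyI)
    fix e :: real assume e: "e > 0"
    obtain N where N: "4 / e\<^sup>2 < real N" using reals_Archimedean2 by blast
    have N': "4 * inverse (real (Suc N)) < e\<^sup>2"
      using N e by (simp add: field_simps) (smt (verit) zero_less_power)
    have "norm (f m - f n) < e" if "N \<le> m" "N \<le> n" for m n
    proof -
      have "inverse (real (Suc m)) \<le> inverse (real (Suc N))" "inverse (real (Suc n)) \<le> inverse (real (Suc N))"
        using that by (auto simp: field_simps)
      then have "(norm (f m - f n))\<^sup>2 < e\<^sup>2" using parallelogram[of m n] f(2)[of m] f(2)[of n] N' by linarith
      then show ?thesis using e by (simp add: power2_less_imp_less)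
    qed
    then show "\<exists>N. \<forall>m\<ge>N. \<forall>n\<ge>N. norm (f m - f n) < e" by blast
  qed
  then obtain p where p: "f \<longlonglongrightarrow> p" using Cauchy_convergent convergent_def by blast
  have "(\<lambda>n. D (f n)) \<longlonglongrightarrow> D p" unfolding D_def by (intro tendsto_intros p)
  moreover have "(\<lambda>n. d + inverse (real (Suc n))) \<longlonglongrightarrow> d + 0"
    by (intro tendsto_add tendsto_const LIMSEQ_inverse_real_of_nat)
  ultimately have "D p \<le> d + 0" by (rule LIMSEQ_le) (use f(2) less_imp_le in blast)
  then have "D p \<le> D m" if "m \<in> M" for m using d_le[OF that] by simp
  then have "norm (x - p) \<le> norm (x - m)" if "m \<in> M" for m
    using that unfolding D_def by (simp add: power_mono_iff)
  then show ?thesis using closed_sequentially[OF M(2) f(1) p] by blast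
qed

lemma nearest_point_orthogonal:
  fixes M :: "'a::complex_hilbert set"
  assumes M: "csubspace M" and p: "p \<in> M" and nearest: "\<forall>m\<in>M. norm (x - p) \<le> norm (x - m)"
    and m: "m \<in> M"
  shows "cinner (x - p) m = 0"
proof (cases "m = 0")
  case False
  let ?t = "cinner (x - p) m / complex_of_real ((norm m)\<^sup>2)"
  have "p + ?t *\<^sub>C m \<in> M" using M p m csubspace_add csubspace_scaleC by blast
  then have "(norm (x - p))\<^sup>2 \<le> (norm (x - p - ?t *\<^sub>C m))\<^sup>2"
    using nearest by (simp add: power_mono diff_diff_eq)
  also have "\<dots> = (norm (x - p))\<^sup>2 - (cmod (cinner (x - p) m))\<^sup>2 / (norm m)\<^sup>2"
    by (rule power2_norm_remove_component[OF False])
  finally have "(cmod (cinner (x - p) m))\<^sup>2 / (norm m)\<^sup>2 \<le> 0" by simp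
  then show ?thesis using False by (simp add: divide_le_0_iff)
qed simp

lemma closed_csubspace_orthogonal_projection:
  fixes M :: "'a::complex_hilbert set"
  assumes M: "csubspace M" "closed M"
  shows "\<exists>P. bop P \<and> (\<forall>x. P x \<in> M \<and> (\<forall>m\<in>M. cinner (x - P x) m = 0))"
proof -
  have "\<exists>p. p \<in> M \<and> (\<forall>m\<in>M. cinner (x - p) m = 0)" for x
    using closed_csubspace_nearest_point[OF M, of x] nearest_point_orthogonal[OF M(1)] by blast
  then obtain P where P: "\<And>x. P x \<in> M" "\<And>x m. m \<in> M \<Longrightarrow> cinner (x - P x) m = 0" by metis
  have unique: "p = P x" if "p \<in> M" "\<forall>m\<in>M. cinner (x - p) m = 0" for x p
  proof -
    have "p - P x \<in> M" using csubspace_diff[OF M(1)] that(1) P by blast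
    then have "cinner (x - P x) (p - P x) - cinner (x - p) (p - P x) = 0" using that P by simp
    then have "cinner (p - P x) (p - P x) = 0" by (simp add: cinner_diff_left)
    then show ?thesis by (simp add: cinner_eq_zero_iff)
  qed
  have add: "P (x + y) = P x + P y" for x y
  proof (rule unique[symmetric])
    have e: "x + y - (P x + P y) = (x - P x) + (y - P y)" by simp
    show "\<forall>m\<in>M. cinner (x + y - (P x + P y)) m = 0"
      unfolding e cinner_add_left using P by simp
  qed (use P csubspace_add[OF M(1)] in blast)
  have scale: "P (c *\<^sub>C x) = c *\<^sub>C P x" for c x
    by (rule unique[symmetric])
      (use P csubspace_scaleC[OF M(1)] in \<open>auto simp: scaleC_diff_right[symmetric] cinner_scaleC_left\<close>)
  have contraction: "norm (P x) \<le> norm x" for x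
  proof -
    have "cinner (x - P x) (P x) = 0" using P by blast
    then have "(norm (P x))\<^sup>2 = Re (cinner x (P x))" by (simp add: power2_norm_eq_cinner cinner_diff_left)
    also have "\<dots> \<le> norm x * norm (P x)"
      using cinner_Cauchy_Schwarz[of x "P x"] complex_Re_le_cmod by (rule order_trans[rotated])
    finally show ?thesis by (cases "P x = 0") (auto simp: power2_eq_square)
  qed
  have "bounded_linear P"
    by (rule bounded_linear_intro[where K=1]) (auto simp: add scaleR_scaleC scale contraction)
  then show ?thesis using P scale unfolding bop_def by blast
qed

lemma Riesz_representation:
  fixes f :: "'a::complex_hilbert \<Rightarrow> complex"
  assumes bl: "bounded_linear f" and scale: "\<And>c x. f (c *\<^sub>C x) = c * f x"
  shows "\<exists>y. \<forall>x. f x = cinner x y"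
proof (cases "\<forall>x. f x = 0")
  case False
  then obtain z where z: "f z \<noteq> 0" by blast
  define N where "N = {x. f x = 0}"
  have lin: "linear f" using bl by (rule bounded_linear.linear)
  have "csubspace N" unfolding csubspace_def N_def using lin scale by (simp add: linear_add linear_0)
  moreover have "closed N" unfolding N_def
    by (intro closed_Collect_eq linear_continuous_on bl continuous_on_const)
  ultimately obtain p where p: "p \<in> N" "\<forall>m\<in>N. cinner (z - p) m = 0"
    using closed_csubspace_nearest_point nearest_point_orthogonal by metis
  define u where "u = z - p"
  have fu: "f u = f z" using p(1) lin unfolding u_def N_def by (simp add: linear_diff)
  have uu: "cinner u u \<noteq> 0" using fu z by (auto simp: lin linear_0 cinner_eq_zero_iff)
  have "f x = cinner x ((cnj (f u / cinner u u)) *\<^sub>C u)" for x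
  proof -
    have "f x *\<^sub>C u - f u *\<^sub>C x \<in> N" unfolding N_def using lin scale by (simp add: linear_diff)
    then have "cinner u (f x *\<^sub>C u - f u *\<^sub>C x) = 0" using p(2) unfolding u_def by blast
    then have "cnj (cnj (f x) * cinner u u - cnj (f u) * cinner u x) = 0"
      by (simp add: cinner_diff_right cinner_scaleC_right)
    then have "f x * cinner u u = f u * cinner x u"
      by (simp add: cinner_commute[of u x] cinner_commute[of u u, symmetric])
    then show ?thesis using uu by (simp add: cinner_scaleC_right field_simps)
  qed
  then show ?thesis by blast
qed (auto intro: exI[of _ 0])

lemma adj_spec:
  fixes T :: "'a::complex_hilbert \<Rightarrow> 'a"
  assumes T: "bop T"
  shows "cinner (adj T x) y = cinner x (T y)"
proof -
  have "\<exists>s. \<forall>y. cinner (T y) x = cinner y s" for x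
    by (rule Riesz_representation)
      (simp_all add: bounded_linear_compose[OF bounded_linear_cinner_left bop_bounded_linear[OF T]]
        bop_scaleC[OF T] cinner_scaleC_left)
  then obtain S where S: "\<And>x y. cinner (T y) x = cinner y (S x)" by metis
  have S_adj: "cinner (S x) y = cinner x (T y)" for x y
    by (simp only: cinner_commute[of "S x" y] S[symmetric] cinner_commute[of x "T y"])
  have add: "S (x + x') = S x + S x'" for x x'
    by (rule cinner_ext_right) (simp add: S[symmetric] cinner_add_right)
  have scale: "S (c *\<^sub>C x) = c *\<^sub>C S x" for c x
    by (rule cinner_ext_right) (simp add: S[symmetric] cinner_scaleC_right)
  obtain K where K: "K > 0" "\<And>x. norm (T x) \<le> norm x * K"
    using bounded_linear.pos_bounded[OF bop_bounded_linear[OF T]] by blast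
  have bound: "norm (S x) \<le> norm x * K" for x
  proof -
    have "(norm (S x))\<^sup>2 = Re (cinner (T (S x)) x)" by (simp add: S power2_norm_eq_cinner)
    also have "\<dots> \<le> norm (T (S x)) * norm x"
      using cinner_Cauchy_Schwarz[of "T (S x)" x] complex_Re_le_cmod by (rule order_trans[rotated])
    also have "\<dots> \<le> norm (S x) * K * norm x" using K(2)[of "S x"] by (simp add: mult_right_mono)
    finally have "norm (S x) * norm (S x) \<le> norm (S x) * (norm x * K)"
      by (simp add: power2_eq_square mult_ac)
    then show ?thesis using K(1) by (cases "S x = 0") (auto simp: mult_le_cancel_left)
  qed
  have "bop S" unfolding bop_def
    by (auto intro!: bounded_linear_intro[where K=K] simp: add scale scaleR_scaleC bound)
  have "adj T = S"
    unfolding adj_def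
  proof (rule the_equality)
    show "bop S \<and> (\<forall>x y. cinner (S x) y = cinner x (T y))" using \<open>bop S\<close> S_adj by blast
  next
    fix R assume R: "bop R \<and> (\<forall>x y. cinner (R x) y = cinner x (T y))"
    show "R = S"
    proof
      show "R x = S x" for x by (rule cinner_ext_left) (simp add: R S_adj)
    qed
  qed
  then show ?thesis by (simp add: S_adj)
qed


section \<open>Positive operators and the operator \<open>sharpA\<close>\<close>

lemma positive_op_bop: "positive_op A \<Longrightarrow> bop A"
  by (simp add: positive_op_def)

lemma positive_op_selfadjoint:
  assumes A: "positive_op A"
  shows "cinner (A x) y = cinner x (A y)"
proof -
  have bA: "bop A" and im: "\<And>z. Im (cinner (A z) z) = 0" using A by (auto simp: positive_op_def)
  let ?a = "cinner (A x) y" and ?b = "cinner (A y) x"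
  have "Im (cinner (A (x + y)) (x + y)) = 0" by (rule im)
  then have 1: "Im ?a + Im ?b = 0" using im[of x] im[of y]
    by (simp add: bop_add[OF bA] cinner_add_left cinner_add_right)
  have "Im (cinner (A (x + \<i> *\<^sub>C y)) (x + \<i> *\<^sub>C y)) = 0" by (rule im)
  then have 2: "Re ?b - Re ?a = 0" using im[of x] im[of y]
    by (simp add: bop_add[OF bA] bop_scaleC[OF bA] cinner_add_left cinner_add_right
        cinner_scaleC_left cinner_scaleC_right)
  have "?b = cnj ?a" using 1 2 by (simp add: complex_eq_iff)
  then show ?thesis by (simp add: cinner_commute[of x "A y"])
qed

lemma hermitian_form_positive_op:
  assumes A: "positive_op A"
  shows "hermitian_form (\<lambda>x y. cinner (A x) y)"
proof
  fix x y z a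
  show "cinner (A (x + y)) z = cinner (A x) z + cinner (A y) z"
    by (simp add: bop_add[OF positive_op_bop[OF A]] cinner_add_left)
  show "cinner (A (a *\<^sub>C x)) y = a * cinner (A x) y"
    by (simp add: bop_scaleC[OF positive_op_bop[OF A]] cinner_scaleC_left)
  show "cinner (A y) x = cnj (cinner (A x) y)"
    by (simp only: positive_op_selfadjoint[OF A, of y x] cinner_commute[of y "A x"])
  show "0 \<le> Re (cinner (A x) x)" using A by (simp add: positive_op_def)
qed

lemma positive_op_kernel_closure_range:
  assumes A: "positive_op A" and u: "u \<in> closure (range A)" and Au: "A u = 0"
  shows "u = 0"
proof -
  have "range A \<subseteq> {m. cinner u m = 0}"
    using positive_op_selfadjoint[OF A, of u] Au by auto
  moreover have "closed {m. cinner u m = 0}"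
    by (intro closed_Collect_eq linear_continuous_on bounded_linear_cinner_right continuous_on_const)
  ultimately have "closure (range A) \<subseteq> {m. cinner u m = 0}" by (rule closure_minimal)
  then have "cinner u u = 0" using u by blast
  then show ?thesis by (simp add: cinner_eq_zero_iff)
qed

text \<open>\<open>x - P x\<close> is orthogonal to the range of the selfadjoint \<open>A\<close>, hence lies in its kernel.\<close>

lemma positive_op_projection_closure_range:
  assumes A: "positive_op A"
  shows "\<exists>P. bop P \<and> (\<forall>x. P x \<in> closure (range A) \<and> A (P x) = A x)"
proof -
  have bA: "bop A" by (rule positive_op_bop[OF A])
  obtain P where P: "bop P" "\<And>x. P x \<in> closure (range A)"
    "\<And>x m. m \<in> closure (range A) \<Longrightarrow> cinner (x - P x) m = 0"
    using closed_csubspace_orthogonal_projection[OF csubspace_closure[OF csubspace_range[OF bA]]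
        closed_closure] by blast
  have "A (x - P x) = 0" for x
  proof (rule cinner_ext_left)
    fix v
    have "cinner (x - P x) (A v) = 0" using P(3) closure_subset by blast
    then show "cinner (A (x - P x)) v = cinner 0 v" using positive_op_selfadjoint[OF A] by simp
  qed
  then have "A (P x) = A x" for x by (simp add: bop_diff[OF bA])
  then show ?thesis using P by blast
qed

lemma sharpA_spec:
  assumes A: "positive_op A" and X: "X \<in> BA A"
  shows "bop (sharpA A X) \<and> A \<circ> sharpA A X = adj X \<circ> A \<and> range (sharpA A X) \<subseteq> closure (range A)"
proof -
  have bA: "bop A" by (rule positive_op_bop[OF A])
  obtain R where R: "bop R" "A \<circ> R = adj X \<circ> A" using X by (auto simp: BA_def)
  obtain P where P: "bop P" "\<forall>x. P x \<in> closure (range A) \<and> A (P x) = A x"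
    using positive_op_projection_closure_range[OF A] by blast
  define R0 where "R0 x = P (R x)" for x
  have spec: "bop R0 \<and> A \<circ> R0 = adj X \<circ> A \<and> range R0 \<subseteq> closure (range A)"
    using bop_comp[OF P(1) R(1)] P(2) R(2) unfolding R0_def by (auto simp: fun_eq_iff)
  have unique: "R' = R0" if R': "bop R' \<and> A \<circ> R' = adj X \<circ> A \<and> range R' \<subseteq> closure (range A)" for R'
  proof
    fix x
    have "R' x - R0 x \<in> closure (range A)"
      using csubspace_diff[OF csubspace_closure[OF csubspace_range[OF bA]]] R' spec by blast
    moreover have "A (R' x - R0 x) = 0"
      using R' spec by (simp add: bop_diff[OF bA] fun_eq_iff)
    ultimately show "R' x = R0 x" using positive_op_kernel_closure_range[OF A] by fastforce
  qed
  have "sharpA A X = R0"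
    unfolding sharpA_def using spec unique by (rule the_equality)
  then show ?thesis using spec by simp
qed

lemma cinner_A_sharpA:
  assumes A: "positive_op A" and X: "X \<in> BA A"
  shows "cinner (A (sharpA A X u)) v = cinner (A u) (X v)"
proof -
  have "A (sharpA A X u) = adj X (A u)"
    using sharpA_spec[OF A X] by (simp add: fun_eq_iff)
  moreover have "bop X" using X by (simp add: BA_def)
  ultimately show ?thesis by (simp add: adj_spec)
qed


section \<open>The \<open>A\<close>-seminorm, \<open>A\<close>-adjoints and \<open>A\<close>-bounded operators\<close>

lemma normA_nonneg: "positive_op A \<Longrightarrow> 0 \<le> normA A x"
  by (simp add: normA_def positive_op_def)

lemma power2_normA: "positive_op A \<Longrightarrow> (normA A x)\<^sup>2 = Re (cinner (A x) x)"
  by (simp add: normA_def positive_op_def)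

lemma normA_Cauchy_Schwarz:
  assumes A: "positive_op A"
  shows "cmod (cinner (A x) y) \<le> normA A x * normA A y"
proof -
  have "(cmod (cinner (A x) y))\<^sup>2 \<le> (normA A x * normA A y)\<^sup>2"
    using hermitian_form.Cauchy_Schwarz[OF hermitian_form_positive_op[OF A], of x y]
    by (simp add: power_mult_distrib power2_normA[OF A])
  then show ?thesis by (rule power2_le_imp_le) (simp add: normA_nonneg[OF A])
qed

lemma normA_eq_0_imp_A_eq_0:
  assumes A: "positive_op A" and x: "normA A x = 0"
  shows "A x = 0"
proof (rule cinner_ext_left)
  fix y show "cinner (A x) y = cinner 0 y"
    using normA_Cauchy_Schwarz[OF A, of x y] x by simp
qed

lemma normA_eq_if_A_eq:
  assumes A: "positive_op A" and pq: "A p = A q"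
  shows "normA A p = normA A q"
proof -
  have "cinner (A p) p = cnj (cinner (A q) q)"
    by (simp add: pq positive_op_selfadjoint[OF A, of q p] cinner_commute[of q "A q"])
  then show ?thesis unfolding normA_def by simp
qed

lemma normA_scaleR:
  assumes A: "positive_op A"
  shows "normA A (r *\<^sub>R x) = \<bar>r\<bar> * normA A x"
proof -
  have "Re (cinner (A (r *\<^sub>R x)) (r *\<^sub>R x)) = r\<^sup>2 * Re (cinner (A x) x)"
    by (simp add: bop_scaleR[OF positive_op_bop[OF A]] cinner_scaleR_left cinner_scaleR_right
        power2_eq_square)
  then show ?thesis unfolding normA_def by (simp add: real_sqrt_mult)
qed

lemma power2_normA_add:
  assumes A: "positive_op A"
  shows "(normA A (x + y))\<^sup>2 = (normA A x)\<^sup>2 + 2 * Re (cinner (A x) y) + (normA A y)\<^sup>2"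
proof -
  have "Re (cinner (A y) x) = Re (cinner (A x) y)"
    by (simp add: hermitian_form.commute[OF hermitian_form_positive_op[OF A], of x y])
  then show ?thesis
    by (simp add: power2_normA[OF A] bop_add[OF positive_op_bop[OF A]] cinner_add_left cinner_add_right)
qed

lemma normA_triangle:
  assumes A: "positive_op A"
  shows "normA A (x + y) \<le> normA A x + normA A y"
proof -
  have "(normA A (x + y))\<^sup>2 \<le> (normA A x)\<^sup>2 + 2 * (normA A x * normA A y) + (normA A y)\<^sup>2"
    unfolding power2_normA_add[OF A]
    using complex_Re_le_cmod[of "cinner (A x) y"] normA_Cauchy_Schwarz[OF A, of x y] by linarith
  also have "\<dots> = (normA A x + normA A y)\<^sup>2" by (simp add: power2_sum)
  finally show ?thesis by (rule power2_le_imp_le) (simp add: normA_nonneg[OF A])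
qed

definition A_adjoint :: "('a::complex_hilbert \<Rightarrow> 'a) \<Rightarrow> ('a \<Rightarrow> 'a) \<Rightarrow> ('a \<Rightarrow> 'a) \<Rightarrow> bool" where
  "A_adjoint A T R \<longleftrightarrow> (\<forall>u v. cinner (A (T u)) v = cinner (A u) (R v))"

lemma A_adjoint_sym:
  assumes A: "positive_op A" and TR: "A_adjoint A T R"
  shows "A_adjoint A R T"
  unfolding A_adjoint_def
proof (intro allI)
  interpret hermitian_form "\<lambda>x y. cinner (A x) y" by (rule hermitian_form_positive_op[OF A])
  fix u v
  have "cinner (A (R u)) v = cnj (cinner (A v) (R u))" by (rule commute)
  also have "\<dots> = cnj (cinner (A (T v)) u)" using TR by (simp add: A_adjoint_def)
  also have "\<dots> = cinner (A u) (T v)" by (rule commute[symmetric])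
  finally show "cinner (A (R u)) v = cinner (A u) (T v)" .
qed

lemma A_adjoint_sharpA: "positive_op A \<Longrightarrow> X \<in> BA A \<Longrightarrow> A_adjoint A (sharpA A X) X"
  by (simp add: A_adjoint_def cinner_A_sharpA)

lemma A_adjoint_comp:
  "A_adjoint A S S' \<Longrightarrow> A_adjoint A T T' \<Longrightarrow> A_adjoint A (\<lambda>x. S (T x)) (\<lambda>x. T' (S' x))"
  by (simp add: A_adjoint_def)

lemma A_adjoint_add:
  assumes A: "positive_op A" and "A_adjoint A S S'" "A_adjoint A T T'"
  shows "A_adjoint A (\<lambda>x. S x + T x) (\<lambda>x. S' x + T' x)"
  using assms(2,3)
  by (simp add: A_adjoint_def bop_add[OF positive_op_bop[OF A]] cinner_add_left cinner_add_right)

lemma A_adjoint_scaleC: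
  assumes A: "positive_op A" and "A_adjoint A S S'"
  shows "A_adjoint A (\<lambda>x. c *\<^sub>C S x) (\<lambda>x. cnj c *\<^sub>C S' x)"
  using assms(2)
  by (simp add: A_adjoint_def bop_scaleC[OF positive_op_bop[OF A]] cinner_scaleC_left cinner_scaleC_right)

lemma A_adjoint_funpow: "A_adjoint A S S \<Longrightarrow> A_adjoint A (S ^^ n) (S ^^ n)"
proof (induction n)
  case (Suc n)
  then show ?case using A_adjoint_comp[of A S S "S ^^ n" "S ^^ n"] by (simp add: funpow_swap1)
qed (simp add: A_adjoint_def)

lemma power2_normA_le_A_adjoint:
  assumes A: "positive_op A" and TR: "A_adjoint A T R"
  shows "(normA A (T x))\<^sup>2 \<le> normA A x * normA A (R (T x))"
proof -
  have "(normA A (T x))\<^sup>2 = Re (cinner (A x) (R (T x)))"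
    using TR by (simp add: power2_normA[OF A] A_adjoint_def)
  also have "\<dots> \<le> normA A x * normA A (R (T x))"
    using complex_Re_le_cmod normA_Cauchy_Schwarz[OF A] by (rule order_trans)
  finally show ?thesis .
qed

definition A_bounded :: "('a::complex_hilbert \<Rightarrow> 'a) \<Rightarrow> ('a \<Rightarrow> 'a) \<Rightarrow> bool" where
  "A_bounded A T \<longleftrightarrow> (\<exists>K. \<forall>u. normA A (T u) \<le> K * normA A u)"

lemma normA_le_abs_bound:
  assumes A: "positive_op A" and K: "\<And>u. normA A (T u) \<le> K * normA A u"
  shows "normA A (T x) \<le> \<bar>K\<bar> * normA A x"
  using K[of x] mult_right_mono[OF abs_ge_self normA_nonneg[OF A]] by (rule order_trans)

lemma A_bounded_comp:
  assumes A: "positive_op A" and "A_bounded A S" "A_bounded A T"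
  shows "A_bounded A (\<lambda>x. S (T x))"
proof -
  obtain K L where K: "\<And>u. normA A (S u) \<le> K * normA A u" and L: "\<And>u. normA A (T u) \<le> L * normA A u"
    using assms(2,3) unfolding A_bounded_def by blast
  have "normA A (S (T u)) \<le> \<bar>K\<bar> * L * normA A u" for u
  proof -
    have "normA A (S (T u)) \<le> \<bar>K\<bar> * normA A (T u)" by (rule normA_le_abs_bound[OF A K])
    also have "\<dots> \<le> \<bar>K\<bar> * (L * normA A u)" using L[of u] by (simp add: mult_left_mono)
    finally show ?thesis by (simp add: mult.assoc)
  qed
  then show ?thesis unfolding A_bounded_def by blast
qed

lemma A_bounded_add:
  assumes A: "positive_op A" and "A_bounded A S" "A_bounded A T"
  shows "A_bounded A (\<lambda>x. S x + T x)"
proof -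
  obtain K L where K: "\<And>u. normA A (S u) \<le> K * normA A u" and L: "\<And>u. normA A (T u) \<le> L * normA A u"
    using assms(2,3) unfolding A_bounded_def by blast
  have "normA A (S u + T u) \<le> (K + L) * normA A u" for u
    using normA_triangle[OF A, of "S u" "T u"] K[of u] L[of u] by (simp add: distrib_right)
  then show ?thesis unfolding A_bounded_def by blast
qed

lemma A_bounded_A_eq:
  assumes A: "positive_op A" and T: "bop T" "A_bounded A T" and pq: "A p = A q"
  shows "A (T p) = A (T q)"
proof -
  obtain K where K: "\<And>u. normA A (T u) \<le> K * normA A u" using T(2) unfolding A_bounded_def by blast
  have "normA A (p - q) = 0"
    using pq by (simp add: normA_def bop_diff[OF positive_op_bop[OF A]])
  then have "normA A (T (p - q)) = 0" using K[of "p - q"] normA_nonneg[OF A, of "T (p - q)"] by simp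
  then have "A (T (p - q)) = 0" by (rule normA_eq_0_imp_A_eq_0[OF A])
  then show ?thesis by (simp add: bop_diff[OF T(1)] bop_diff[OF positive_op_bop[OF A]])
qed

lemma bounded_by_repeated_squaring:
  fixes f :: "nat \<Rightarrow> real"
  assumes c: "0 \<le> c" and q: "0 < q"
    and square: "\<And>k. (f k)\<^sup>2 \<le> c * f (Suc k)"
    and growth: "\<And>k. f k \<le> C * q ^ 2 ^ k"
  shows "f 0 \<le> c * q"
proof (cases "c = 0")
  case True
  then show ?thesis using square[of 0] by simp
next
  case False
  then have c: "0 < c" using c by simp
  define h where "h k = f k / (c * q ^ 2 ^ k)" for k
  have pos: "0 < c * q ^ 2 ^ k" for k using c q by simp
  have h_square: "(h k)\<^sup>2 \<le> h (Suc k)" for k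
  proof -
    have "(h k)\<^sup>2 = (f k)\<^sup>2 / (c\<^sup>2 * q ^ 2 ^ Suc k)"
      by (simp add: h_def power_divide power_mult_distrib power_mult[symmetric] mult.commute)
    also have "\<dots> \<le> c * f (Suc k) / (c\<^sup>2 * q ^ 2 ^ Suc k)"
      using square[of k] c q by (simp add: divide_right_mono)
    also have "\<dots> = h (Suc k)" using c by (simp add: h_def power2_eq_square)
    finally show ?thesis .
  qed
  have h_bound: "h k \<le> C / c" for k
    using growth[of k] c q by (simp add: h_def divide_le_eq field_simps)
  show ?thesis
  proof (rule ccontr)
    assume "\<not> f 0 \<le> c * q"
    then have h0: "1 < h 0" using pos[of 0] by (simp add: h_def)
    have lower: "h 0 ^ 2 ^ k \<le> h k" for k
    proof (induction k)
      case (Suc k)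
      have "h 0 ^ 2 ^ Suc k = (h 0 ^ 2 ^ k)\<^sup>2" by (simp add: power_mult[symmetric] mult.commute)
      also have "\<dots> \<le> (h k)\<^sup>2" using Suc.IH h0 by (intro power_mono) auto
      also have "\<dots> \<le> h (Suc k)" by (rule h_square)
      finally show ?case .
    qed simp
    obtain n where "C / c < h 0 ^ n" using real_arch_pow[OF h0] by blast
    moreover have "h 0 ^ n \<le> h 0 ^ 2 ^ n" using h0 less_exp[of n] by (intro power_increasing) auto
    ultimately show False using lower[of n] h_bound[of n] by linarith
  qed
qed

lemma bop_funpow_bound:
  assumes S: "bop S"
  obtains L where "L > 0" "\<And>n v. norm ((S ^^ n) v) \<le> L ^ n * norm v"
proof -
  obtain L where L: "L > 0" "\<And>x. norm (S x) \<le> norm x * L"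
    using bounded_linear.pos_bounded[OF bop_bounded_linear[OF S]] by blast
  have "norm ((S ^^ n) v) \<le> L ^ n * norm v" for n v
  proof (induction n)
    case (Suc n)
    have "norm ((S ^^ Suc n) v) \<le> norm ((S ^^ n) v) * L" using L(2) by simp
    also have "\<dots> \<le> L ^ n * norm v * L" using Suc.IH L(1) by (simp add: mult_right_mono)
    finally show ?case by (simp add: mult_ac)
  qed simp
  then show ?thesis using L(1) that by blast
qed

lemma power2_normA_le_norm:
  assumes A: "positive_op A"
  obtains C where "C > 0" "\<And>x. (normA A x)\<^sup>2 \<le> C * (norm x)\<^sup>2"
proof -
  obtain C where C: "C > 0" "\<And>x. norm (A x) \<le> norm x * C"
    using bounded_linear.pos_bounded[OF bop_bounded_linear[OF positive_op_bop[OF A]]] by blast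
  have "(normA A x)\<^sup>2 \<le> C * (norm x)\<^sup>2" for x
  proof -
    have "(normA A x)\<^sup>2 \<le> cmod (cinner (A x) x)"
      unfolding power2_normA[OF A] by (rule complex_Re_le_cmod)
    also have "\<dots> \<le> norm (A x) * norm x" by (rule cinner_Cauchy_Schwarz)
    also have "\<dots> \<le> norm x * C * norm x" using C(2) by (rule mult_right_mono) simp
    finally show ?thesis by (simp only: power2_eq_square mult_ac)
  qed
  then show ?thesis using C(1) that by blast
qed

lemma A_selfadjoint_A_bounded:
  assumes A: "positive_op A" and S: "bop S" "A_adjoint A S S"
  shows "A_bounded A S"
proof -
  obtain L where L: "L > 0" "\<And>n v. norm ((S ^^ n) v) \<le> L ^ n * norm v"
    using bop_funpow_bound[OF S(1)] by blast
  obtain C where C: "C > 0" "\<And>x. (normA A x)\<^sup>2 \<le> C * (norm x)\<^sup>2"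
    using power2_normA_le_norm[OF A] by blast
  have "normA A (S u) \<le> L * normA A u" for u
  proof -
    define f where "f k = (normA A ((S ^^ 2 ^ k) u))\<^sup>2" for k
    have "f 0 \<le> (normA A u)\<^sup>2 * L\<^sup>2"
    proof (rule bounded_by_repeated_squaring[where f=f and C="C * (norm u)\<^sup>2"])
      fix k
      let ?T = "S ^^ 2 ^ k"
      have "f k \<le> normA A u * normA A (?T (?T u))"
        unfolding f_def by (rule power2_normA_le_A_adjoint[OF A A_adjoint_funpow[OF S(2)]])
      moreover have "0 \<le> f k" unfolding f_def by (rule zero_le_power2)
      ultimately have "(f k)\<^sup>2 \<le> (normA A u * normA A (?T (?T u)))\<^sup>2"
        by (rule power_mono)
      moreover have "f (Suc k) = (normA A (?T (?T u)))\<^sup>2"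
        by (simp only: f_def power_Suc mult_2 funpow_add comp_apply)
      ultimately show "(f k)\<^sup>2 \<le> (normA A u)\<^sup>2 * f (Suc k)"
        by (simp only: power_mult_distrib)
      have "f k \<le> C * (norm (?T u))\<^sup>2" unfolding f_def by (rule C(2))
      also have "\<dots> \<le> C * (L ^ 2 ^ k * norm u)\<^sup>2"
        using L(2) C(1) by (intro mult_left_mono power_mono) simp_all
      also have "\<dots> = C * (norm u)\<^sup>2 * (L\<^sup>2) ^ 2 ^ k"
        by (simp only: power_mult_distrib power_mult[symmetric] mult_ac)
      finally show "f k \<le> C * (norm u)\<^sup>2 * (L\<^sup>2) ^ 2 ^ k" .
    qed (use L(1) in simp_all)
    then have "(normA A (S u))\<^sup>2 \<le> (L * normA A u)\<^sup>2" by (simp add: f_def power_mult_distrib mult.commute)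
    then show ?thesis by (rule power2_le_imp_le) (use L(1) normA_nonneg[OF A] in simp)
  qed
  then show ?thesis unfolding A_bounded_def by blast
qed

lemma A_bounded_if_A_adjoint:
  assumes A: "positive_op A" and T: "bop T" and R: "bop R" and TR: "A_adjoint A T R"
  shows "A_bounded A T"
proof -
  have "A_adjoint A (\<lambda>x. R (T x)) (\<lambda>x. R (T x))"
    using A_adjoint_comp[OF A_adjoint_sym[OF A TR] TR] .
  then obtain K where K: "\<And>u. normA A (R (T u)) \<le> K * normA A u"
    using A_selfadjoint_A_bounded[OF A bop_comp[OF R T]] unfolding A_bounded_def by blast
  have "normA A (T u) \<le> sqrt \<bar>K\<bar> * normA A u" for u
  proof -
    have "(normA A (T u))\<^sup>2 \<le> normA A u * normA A (R (T u))"
      by (rule power2_normA_le_A_adjoint[OF A TR])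
    also have "\<dots> \<le> normA A u * (\<bar>K\<bar> * normA A u)"
    proof (rule mult_left_mono)
      show "normA A (R (T u)) \<le> \<bar>K\<bar> * normA A u"
        using K[of u] mult_right_mono[OF abs_ge_self normA_nonneg[OF A]] by (rule order_trans)
    qed (rule normA_nonneg[OF A])
    also have "\<dots> = (sqrt \<bar>K\<bar> * normA A u)\<^sup>2" by (simp add: power2_eq_square power_mult_distrib)
    finally show ?thesis by (rule power2_le_imp_le) (simp add: normA_nonneg[OF A])
  qed
  then show ?thesis unfolding A_bounded_def by blast
qed

lemma bop_sharpA: "positive_op A \<Longrightarrow> X \<in> BA A \<Longrightarrow> bop (sharpA A X)"
  using sharpA_spec by blast

lemma A_bounded_BA:
  assumes A: "positive_op A" and X: "X \<in> BA A"
  shows "A_bounded A X" "A_bounded A (sharpA A X)"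
proof -
  have bX: "bop X" using X by (simp add: BA_def)
  have "A_adjoint A (sharpA A X) X" by (rule A_adjoint_sharpA[OF A X])
  then show "A_bounded A (sharpA A X)" "A_bounded A X"
    using A_bounded_if_A_adjoint[OF A bop_sharpA[OF A X] bX] A_bounded_if_A_adjoint[OF A bX bop_sharpA[OF A X]]
      A_adjoint_sym[OF A] by blast+
qed

lemma normA_zero [simp]: "positive_op A \<Longrightarrow> normA A 0 = 0"
  by (simp add: normA_def bop_zero positive_op_bop)


section \<open>The \<open>A\<close>-operator seminorm and the \<open>A\<close>-numerical radius\<close>

lemma bdd_above_opnormA:
  assumes A: "positive_op A" and T: "A_bounded A T"
  shows "bdd_above (insert 0 {normA A (T x) / normA A x | x. x \<in> closure (range A) \<and> x \<noteq> 0})"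
proof -
  obtain K where K: "\<And>u. normA A (T u) \<le> K * normA A u" using T unfolding A_bounded_def by blast
  have "normA A (T x) / normA A x \<le> \<bar>K\<bar>" for x
  proof (cases "normA A x = 0")
    case False
    then have "0 < normA A x" using normA_nonneg[OF A, of x] by simp
    then show ?thesis using normA_le_abs_bound[OF A K, of x] by (simp add: pos_divide_le_eq)
  qed simp
  then show ?thesis by (auto intro!: bdd_aboveI[where M="\<bar>K\<bar>"])
qed

lemma opnormA_nonneg: "positive_op A \<Longrightarrow> A_bounded A T \<Longrightarrow> 0 \<le> opnormA A T"
  unfolding opnormA_def by (rule cSup_upper[OF insertI1 bdd_above_opnormA])

text \<open>The supremum defining \<open>\<parallel>T\<parallel>\<^sub>A\<close> only runs over the closure of the range of \<open>A\<close>; a general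
  vector is first projected there, which changes neither \<open>\<parallel>w\<parallel>\<^sub>A\<close> nor \<open>\<parallel>T w\<parallel>\<^sub>A\<close>.\<close>

lemma opnormA_bound:
  assumes A: "positive_op A" and T: "bop T" "A_bounded A T"
  shows "normA A (T w) \<le> opnormA A T * normA A w"
proof (cases "normA A w = 0")
  case True
  obtain K where "\<And>u. normA A (T u) \<le> K * normA A u" using T(2) unfolding A_bounded_def by blast
  then have "normA A (T w) \<le> 0" using True by (metis mult_zero_right)
  then show ?thesis using True by simp
next
  case False
  obtain P where P: "\<And>x. P x \<in> closure (range A)" "\<And>x. A (P x) = A x"
    using positive_op_projection_closure_range[OF A] by blast
  have w: "normA A (P w) = normA A w" by (rule normA_eq_if_A_eq[OF A P(2)])
  have Tw: "normA A (T (P w)) = normA A (T w)" by (rule normA_eq_if_A_eq[OF A A_bounded_A_eq[OF A T P(2)]])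
  have "P w \<noteq> 0" using False w A by auto
  then have "normA A (T (P w)) / normA A (P w)
      \<in> {normA A (T x) / normA A x | x. x \<in> closure (range A) \<and> x \<noteq> 0}"
    using P(1) by blast
  then have "normA A (T w) / normA A w
      \<in> insert 0 {normA A (T x) / normA A x | x. x \<in> closure (range A) \<and> x \<noteq> 0}"
    unfolding w Tw by blast
  then have "normA A (T w) / normA A w \<le> opnormA A T"
    unfolding opnormA_def by (rule cSup_upper[OF _ bdd_above_opnormA[OF A T(2)]])
  moreover have "0 < normA A w" using False normA_nonneg[OF A, of w] by simp
  ultimately show ?thesis by (simp add: pos_divide_le_eq)
qed

lemma bdd_above_numradA:
  assumes A: "positive_op A" and S: "A_bounded A S"
  shows "bdd_above (insert 0 (cmod ` numrangeA A S))"
proof -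
  obtain K where K: "\<And>u. normA A (S u) \<le> K * normA A u" using S unfolding A_bounded_def by blast
  have "cmod (cinner (A (S x)) x) \<le> \<bar>K\<bar>" if "normA A x = 1" for x
    using normA_Cauchy_Schwarz[OF A, of "S x" x] normA_le_abs_bound[OF A K, of x] that by simp
  then show ?thesis unfolding numrangeA_def by (auto intro!: bdd_aboveI[where M="\<bar>K\<bar>"])
qed

lemma numradA_nonneg: "positive_op A \<Longrightarrow> A_bounded A S \<Longrightarrow> 0 \<le> numradA A S"
  unfolding numradA_def by (rule cSup_upper[OF insertI1 bdd_above_numradA])

lemma numradA_bound:
  assumes A: "positive_op A" and S: "bop S" "A_bounded A S"
  shows "cmod (cinner (A (S w)) w) \<le> numradA A S * (normA A w)\<^sup>2"
proof (cases "normA A w = 0")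
  case True
  have "cmod (cinner (A (S w)) w) \<le> normA A (S w) * normA A w" by (rule normA_Cauchy_Schwarz[OF A])
  then show ?thesis using True by simp
next
  case False
  then have n: "0 < normA A w" using normA_nonneg[OF A, of w] by simp
  define r where "r = 1 / normA A w"
  have "normA A (r *\<^sub>R w) = 1" using n by (simp add: normA_scaleR[OF A] r_def)
  then have "cmod (cinner (A (S (r *\<^sub>R w))) (r *\<^sub>R w)) \<in> insert 0 (cmod ` numrangeA A S)"
    unfolding numrangeA_def by blast
  then have "cmod (cinner (A (S (r *\<^sub>R w))) (r *\<^sub>R w)) \<le> numradA A S"
    unfolding numradA_def by (rule cSup_upper[OF _ bdd_above_numradA[OF A S(2)]])
  moreover have "cinner (A (S (r *\<^sub>R w))) (r *\<^sub>R w) = complex_of_real (r * r) * cinner (A (S w)) w"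
    by (simp add: bop_scaleR[OF S(1)] bop_scaleR[OF positive_op_bop[OF A]] cinner_scaleR_left
        cinner_scaleR_right)
  ultimately have "r * r * cmod (cinner (A (S w)) w) \<le> numradA A S"
    by (simp add: norm_mult)
  then have "cmod (cinner (A (S w)) w) / (normA A w)\<^sup>2 \<le> numradA A S"
    by (simp add: r_def power2_eq_square)
  then show ?thesis using n by (simp add: pos_divide_le_eq)
qed

lemma numradA_le:
  assumes "0 \<le> c" and "\<And>x. normA A x = 1 \<Longrightarrow> cmod (cinner (A (T x)) x) \<le> c"
  shows "numradA A T \<le> c"
  unfolding numradA_def
proof (rule cSup_least)
  fix r assume "r \<in> insert 0 (cmod ` numrangeA A T)"
  then show "r \<le> c" using assms unfolding numrangeA_def by auto
qed simp


lemma four_Re_cinner_A_le: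
  assumes A: "positive_op A"
  shows "4 * Re (cinner (A p) q) \<le> (normA A (p + q))\<^sup>2"
proof -
  have "(normA A (p + (-1) *\<^sub>R q))\<^sup>2 = (normA A p)\<^sup>2 - 2 * Re (cinner (A p) q) + (normA A q)\<^sup>2"
    unfolding power2_normA_add[OF A] normA_scaleR[OF A] cinner_scaleR_right by simp
  then have "2 * Re (cinner (A p) q) \<le> (normA A p)\<^sup>2 + (normA A q)\<^sup>2"
    using zero_le_power2[of "normA A (p + (-1) *\<^sub>R q)"] by linarith
  then show ?thesis by (simp add: power2_normA_add[OF A])
qed

lemma exists_unimodular_rotation: "\<exists>\<omega>. cmod \<omega> = 1 \<and> \<omega> * c = complex_of_real (cmod c)"
proof (intro exI conjI)
  show "cmod (cis (- Arg c)) = 1" by simp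
  have "cis (- Arg c) * c = cis (- Arg c) * (complex_of_real (cmod c) * cis (Arg c))"
    by (metis rcis_cmod_Arg rcis_def)
  also have "\<dots> = complex_of_real (cmod c)" by (simp add: cis_mult mult.left_commute)
  finally show "cis (- Arg c) * c = complex_of_real (cmod c)" .
qed

lemma cinner_A_cross_sharpA:
  assumes A: "positive_op A" and X: "X \<in> BA A" and Y: "Y \<in> BA A"
  shows "cinner (A z) (Y (sharpA A X z)) = cnj (cinner (A z) (X (sharpA A Y z)))"
proof -
  have "cinner (A z) (Y (sharpA A X z)) = cinner (A (sharpA A Y z)) (sharpA A X z)"
    by (rule cinner_A_sharpA[OF A Y, symmetric])
  also have "\<dots> = cnj (cinner (A (sharpA A X z)) (sharpA A Y z))"
    by (rule hermitian_form.commute[OF hermitian_form_positive_op[OF A]])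
  also have "\<dots> = cnj (cinner (A z) (X (sharpA A Y z)))" by (simp add: cinner_A_sharpA[OF A X])
  finally show ?thesis .
qed

lemma power2_normA_sharp_combination_le:
  fixes A X Y :: "'a::complex_hilbert \<Rightarrow> 'a"
  assumes A: "positive_op A" and X: "X \<in> BA A" and Y: "Y \<in> BA A" and \<omega>: "cmod \<omega> = 1"
    and a: "\<And>z. normA A (X (sharpA A X z) + Y (sharpA A Y z)) \<le> a * normA A z"
    and b: "\<And>z. cmod (cinner (A (X (sharpA A Y z))) z) \<le> b * (normA A z)\<^sup>2"
  shows "(normA A (cnj \<omega> *\<^sub>C sharpA A X z + sharpA A Y z))\<^sup>2 \<le> (a + 2 * b) * (normA A z)\<^sup>2"
proof -
  let ?Xs = "sharpA A X" and ?Ys = "sharpA A Y"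
  let ?v = "cnj \<omega> *\<^sub>C ?Xs z + ?Ys z"
  have bX: "bop X" and bY: "bop Y" using X Y by (simp_all add: BA_def)
  define t1 where "t1 = cinner (A z) (X (?Xs z) + Y (?Ys z))"
  define t2 where "t2 = cinner (A z) (X (?Ys z))"
  have "A_adjoint A (\<lambda>x. cnj \<omega> *\<^sub>C ?Xs x + ?Ys x) (\<lambda>x. cnj (cnj \<omega>) *\<^sub>C X x + Y x)"
    using A_adjoint_add[OF A A_adjoint_scaleC[OF A A_adjoint_sharpA[OF A X]] A_adjoint_sharpA[OF A Y]] .
  then have "cinner (A ?v) ?v = cinner (A z) (\<omega> *\<^sub>C X ?v + Y ?v)"
    by (simp add: A_adjoint_def)
  also have "\<dots> = (\<omega> * cnj \<omega>) * cinner (A z) (X (?Xs z)) + cnj \<omega> * t2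
      + \<omega> * cinner (A z) (Y (?Xs z)) + cinner (A z) (Y (?Ys z))"
    unfolding t2_def
    by (simp add: bop_add[OF bX] bop_scaleC[OF bX] bop_add[OF bY] bop_scaleC[OF bY]
        cinner_add_right cinner_scaleC_right algebra_simps)
  also have "\<dots> = t1 + cnj \<omega> * t2 + \<omega> * cnj t2"
    using \<omega> complex_norm_square[of \<omega>] unfolding t1_def t2_def
    by (simp add: cinner_add_right cinner_A_cross_sharpA[OF A X Y])
  finally have "(normA A ?v)\<^sup>2 = Re (t1 + cnj \<omega> * t2 + \<omega> * cnj t2)"
    by (simp add: power2_normA[OF A])
  also have "\<dots> \<le> cmod t1 + cmod t2 + cmod t2"
    using complex_Re_le_cmod[of "t1 + cnj \<omega> * t2 + \<omega> * cnj t2"] \<omega>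
      norm_triangle_ineq[of "t1 + cnj \<omega> * t2" "\<omega> * cnj t2"] norm_triangle_ineq[of t1 "cnj \<omega> * t2"]
    by (simp add: norm_mult)
  also have "\<dots> \<le> a * (normA A z)\<^sup>2 + b * (normA A z)\<^sup>2 + b * (normA A z)\<^sup>2"
  proof -
    have "cmod t1 \<le> normA A z * (a * normA A z)"
      unfolding t1_def using normA_Cauchy_Schwarz[OF A] a normA_nonneg[OF A]
      by (rule order_trans[OF _ mult_left_mono])
    moreover have "cmod t2 \<le> b * (normA A z)\<^sup>2"
      using b[of z] hermitian_form.commute[OF hermitian_form_positive_op[OF A], of "X (?Ys z)" z]
      unfolding t2_def by simp
    ultimately show ?thesis by (simp add: power2_eq_square mult_ac)
  qed
  finally show ?thesis by (simp add: algebra_simps)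
qed

lemma cmod_cinner_sharpA_comp_le:
  fixes A X Y :: "'a::complex_hilbert \<Rightarrow> 'a"
  assumes A: "positive_op A" and X: "X \<in> BA A" and Y: "Y \<in> BA A" and x: "normA A x = 1"
    and a: "\<And>z. normA A (X (sharpA A X z) + Y (sharpA A Y z)) \<le> a * normA A z"
    and b: "\<And>z. cmod (cinner (A (X (sharpA A Y z))) z) \<le> b * (normA A z)\<^sup>2"
  shows "cmod (cinner (A (sharpA A Y (X x))) x) \<le> a / 4 + b / 2"
proof -
  let ?c = "cinner (A (X x)) (Y x)"
  obtain \<omega> where \<omega>: "cmod \<omega> = 1" "\<omega> * ?c = complex_of_real (cmod ?c)"
    using exists_unimodular_rotation by blast
  define W where "W u = \<omega> *\<^sub>C X u + Y u" for u
  define W' where "W' u = cnj \<omega> *\<^sub>C sharpA A X u + sharpA A Y u" for u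
  have "A_adjoint A W W'"
    unfolding W_def W'_def
    using A_adjoint_add[OF A A_adjoint_scaleC[OF A A_adjoint_sym[OF A A_adjoint_sharpA[OF A X]]]
        A_adjoint_sym[OF A A_adjoint_sharpA[OF A Y]]] .
  define s where "s = (normA A (W x))\<^sup>2"
  have s0: "0 \<le> s" unfolding s_def by simp
  have "4 * cmod ?c \<le> s"
    using four_Re_cinner_A_le[OF A, of "\<omega> *\<^sub>C X x" "Y x"] \<omega>(2)
    unfolding s_def W_def by (simp add: bop_scaleC[OF positive_op_bop[OF A]] cinner_scaleC_left)
  moreover have "s \<le> a + 2 * b"
  proof -
    have "s \<le> normA A (W' (W x))"
      using power2_normA_le_A_adjoint[OF A \<open>A_adjoint A W W'\<close>, of x] x unfolding s_def by simp
    then have "s\<^sup>2 \<le> (normA A (W' (W x)))\<^sup>2" using s0 by (rule power_mono)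
    also have "\<dots> \<le> (a + 2 * b) * s"
      unfolding W'_def s_def by (rule power2_normA_sharp_combination_le[OF A X Y \<omega>(1) a b])
    finally have "s * s \<le> (a + 2 * b) * s" by (simp add: power2_eq_square)
    moreover have "0 \<le> a" using order_trans[OF normA_nonneg[OF A] a[of x]] x by simp
    moreover have "0 \<le> b" using order_trans[OF norm_ge_zero b[of x]] x by simp
    ultimately show ?thesis using s0 by (cases "s = 0") (simp_all add: mult_le_cancel_right)
  qed
  moreover have "cinner (A (sharpA A Y (X x))) x = ?c" by (rule cinner_A_sharpA[OF A Y])
  ultimately show ?thesis by simp
qed

theorem mainTheorem18:
  fixes A X Y :: "'a::complex_hilbert \<Rightarrow> 'a"
  assumes "positive_op A"
    and "X \<in> BA A"
    and "Y \<in> BA A"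
  shows "numradA A (sharpA A Y \<circ> X)
    \<le> 1/4 * opnormA A (\<lambda>x. X (sharpA A X x) + Y (sharpA A Y x))
      + 1/2 * numradA A (X \<circ> sharpA A Y)"
proof -
  note A = assms(1) and X = assms(2) and Y = assms(3)
  have bX: "bop X" and bY: "bop Y" using X Y by (simp_all add: BA_def)
  note bXs = bop_sharpA[OF A X] and bYs = bop_sharpA[OF A Y]
  note ABX = A_bounded_BA[OF A X] and ABY = A_bounded_BA[OF A Y]
  let ?T = "\<lambda>x. X (sharpA A X x) + Y (sharpA A Y x)"
  have T: "bop ?T" "A_bounded A ?T"
    using bop_add_fun[OF bop_comp[OF bX bXs] bop_comp[OF bY bYs]]
      A_bounded_add[OF A A_bounded_comp[OF A ABX(1,2)] A_bounded_comp[OF A ABY(1,2)]] by simp_all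
  have S: "bop (X \<circ> sharpA A Y)" "A_bounded A (X \<circ> sharpA A Y)"
    using bop_comp[OF bX bYs] A_bounded_comp[OF A ABX(1) ABY(2)] by (simp_all add: comp_def)
  show ?thesis
  proof (rule numradA_le)
    show "0 \<le> 1/4 * opnormA A ?T + 1/2 * numradA A (X \<circ> sharpA A Y)"
      using opnormA_nonneg[OF A T(2)] numradA_nonneg[OF A S(2)] by simp
    have "cmod (cinner (A (X (sharpA A Y z))) z) \<le> numradA A (X \<circ> sharpA A Y) * (normA A z)\<^sup>2" for z
      using numradA_bound[OF A S] by simp
    moreover fix x assume "normA A x = 1"
    ultimately show "cmod (cinner (A ((sharpA A Y \<circ> X) x)) x)
        \<le> 1/4 * opnormA A ?T + 1/2 * numradA A (X \<circ> sharpA A Y)"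
      using cmod_cinner_sharpA_comp_le[OF A X Y _ opnormA_bound[OF A T]] by simp
  qed
qed

end
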